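(* Let $\mathcal{G}=(\Gamma,G)$ be a locally finite nonsingular graph of countable groups, and let $\{u_x,s_e\}$ be the universal $\mathcal{G}$-family generating $C^*(\mathcal{G})$, with $s_{ge}:=u_{r(e),g}s_e$. Let $e,f\in\Gamma^1$, $g\in\Sigma_e$ and $h\in\Sigma_f$. Then $s_{ge}^*s_{hf}=\delta_{ge,hf}\,s_e^*s_e$ and $s_e^*s_es_{hf}=\delta_{r(f),s(e)}(1-\delta_{hf,1\bar e})\,s_{hf}$, where $\delta_{ge,hf}=1$ if $e=f$ and $g=h$ and $0$ otherwise, $\delta_{hf,1\bar e}=1$ if $f=\bar e$ and $h=1$ and $0$ otherwise, and $\delta_{r(f),s(e)}=1$ if $r(f)=s(e)$ and $0$ otherwise.
   Context: Graph of groups: connected graph $\Gamma$ (countable vertices/edges, $r,s$, involution $e\mapsto\bar e$, $\bar e\ne e$, $r(e)=s(\bar e)$), groups $G_x$, $G_e=G_{\bar e}$, injective $\alpha_e:G_e\to G_{r(e)}$; locally finite: each $r^{-1}(v)$ finite, finite-index images; nonsingular: $\alpha_e$ not surjective whenever $r^{-1}(r(e))=\{e\}$. Transversals $\Sigma_e\subseteq G_{r(e)}$ of $G_{r(e)}/\alpha_e(G_e)$ with $1\in\Sigma_e$. $C^*(\mathcal{G})$ is the universal $C^*$-algebra generated by partial isometries $s_e$ ($e\in\Gamma^1$) and partial unitary representations $g\mapsto u_{x,g}$ of $G_x$ ($u_{x,gh}=u_{x,g}u_{x,h}$, $u_{x,g^{-1}}=u_{x,g}^*$) with: (G1) $u_{x,1}u_{y,1}=0$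 for $x\ne y$; (G2) $u_{r(e),\alpha_e(g)}s_e=s_eu_{s(e),\alpha_{\bar e}(g)}$; (G3) $u_{s(e),1}=s_e^*s_e+s_{\bar e}s_{\bar e}^*$; (G4) $s_e^*s_e=\sum_{r(f)=s(e),\,\mu\in\Sigma_f,\,(\mu,f)\ne(1,\bar e)}u_{s(e),\mu}s_fs_f^*u_{s(e),\mu}^*$. *)

theory Defs
  imports Complex_Main "HOL-Algebra.Coset" "HOL-Library.Countable_Set"
begin

class cstar_algebra = real_normed_algebra + banach +
  fixes scaleC :: "complex \<Rightarrow> 'a \<Rightarrow> 'a"
    and invol :: "'a \<Rightarrow> 'a"
  assumes scaleC_of_real: "scaleC (complex_of_real r) x = scaleR r x"
    and scaleC_add_right: "scaleC c (x + y) = scaleC c x + scaleC c y"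
    and scaleC_add_left: "scaleC (c + d) x = scaleC c x + scaleC d x"
    and scaleC_scaleC: "scaleC c (scaleC d x) = scaleC (c * d) x"
    and scaleC_one: "scaleC 1 x = x"
    and mult_scaleC_left: "scaleC c x * y = scaleC c (x * y)"
    and mult_scaleC_right: "x * scaleC c y = scaleC c (x * y)"
    and norm_scaleC: "norm (scaleC c x) = cmod c * norm x"
    and invol_invol: "invol (invol x) = x"
    and invol_add: "invol (x + y) = invol x + invol y"
    and invol_mult: "invol (x * y) = invol y * invol x"
    and invol_scaleC: "invol (scaleC c x) = scaleC (cnj c) (invol x)"
    and cstar_identity: "norm (invol x * x) = norm x ^ 2"

text \<open>Vertices are the elements of type 'v, edges the elements of type 'e.
G x is the vertex group at x, H e the edge group G_e, alpha e the
monomorphism G_e \<rightarrow> G_{r(e)}.\<close>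

definition left_cosets :: "('g, 'm) monoid_scheme \<Rightarrow> 'g set \<Rightarrow> 'g set set" where
  "left_cosets Gr K = {a <#\<^bsub>Gr\<^esub> K | a. a \<in> carrier Gr}"

definition left_transversal :: "('g, 'm) monoid_scheme \<Rightarrow> 'g set \<Rightarrow> 'g set \<Rightarrow> bool" where
  "left_transversal Gr K T \<longleftrightarrow>
     T \<subseteq> carrier Gr \<and> (\<forall>a \<in> carrier Gr. \<exists>!t. t \<in> T \<and> t \<in> a <#\<^bsub>Gr\<^esub> K)"

definition graph_of_groups ::
  "('e \<Rightarrow> 'v) \<Rightarrow> ('e \<Rightarrow> 'v) \<Rightarrow> ('e \<Rightarrow> 'e) \<Rightarrow> ('v \<Rightarrow> 'g monoid) \<Rightarrow> ('e \<Rightarrow> 'h monoid)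
   \<Rightarrow> ('e \<Rightarrow> 'h \<Rightarrow> 'g) \<Rightarrow> bool" where
  "graph_of_groups r s bar G H alpha \<longleftrightarrow>
     countable (UNIV :: 'v set) \<and> countable (UNIV :: 'e set) \<and>
     (\<forall>e. bar (bar e) = e \<and> bar e \<noteq> e \<and> r e = s (bar e)) \<and>
     (\<forall>x y. (x, y) \<in> (range (\<lambda>e. (s e, r e)))\<^sup>*) \<and>
     (\<forall>x. group (G x) \<and> countable (carrier (G x))) \<and>
     (\<forall>e. group (H e) \<and> countable (carrier (H e)) \<and> H (bar e) = H e) \<and>
     (\<forall>e. alpha e \<in> hom (H e) (G (r e)) \<and> inj_on (alpha e) (carrier (H e)))"

definition locally_finite_gog ::
  "('e \<Rightarrow> 'v) \<Rightarrow> ('v \<Rightarrow> 'g monoid) \<Rightarrow> ('e \<Rightarrow> 'h monoid) \<Rightarrow> ('e \<Rightarrow> 'h \<Rightarrow> 'g) \<Rightarrow> bool" where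
  "locally_finite_gog r G H alpha \<longleftrightarrow>
     (\<forall>v. finite {e. r e = v}) \<and>
     (\<forall>e. finite (left_cosets (G (r e)) (alpha e ` carrier (H e))))"

definition nonsingular_gog ::
  "('e \<Rightarrow> 'v) \<Rightarrow> ('v \<Rightarrow> 'g monoid) \<Rightarrow> ('e \<Rightarrow> 'h monoid) \<Rightarrow> ('e \<Rightarrow> 'h \<Rightarrow> 'g) \<Rightarrow> bool" where
  "nonsingular_gog r G H alpha \<longleftrightarrow>
     (\<forall>e. {f. r f = r e} = {e} \<longrightarrow> alpha e ` carrier (H e) \<noteq> carrier (G (r e)))"

definition G_family ::
  "('e \<Rightarrow> 'v) \<Rightarrow> ('e \<Rightarrow> 'v) \<Rightarrow> ('e \<Rightarrow> 'e) \<Rightarrow> ('v \<Rightarrow> 'g monoid) \<Rightarrow> ('e \<Rightarrow> 'h monoid)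
   \<Rightarrow> ('e \<Rightarrow> 'h \<Rightarrow> 'g) \<Rightarrow> ('e \<Rightarrow> 'g set)
   \<Rightarrow> ('v \<Rightarrow> 'g \<Rightarrow> 'a::cstar_algebra) \<Rightarrow> ('e \<Rightarrow> 'a) \<Rightarrow> bool" where
  "G_family r s bar G H alpha Sig u sx \<longleftrightarrow>
     \<comment> \<open>partial isometries\<close>
     (\<forall>e. sx e * invol (sx e) * sx e = sx e) \<and>
     \<comment> \<open>partial unitary representations\<close>
     (\<forall>x. \<forall>g \<in> carrier (G x). \<forall>h \<in> carrier (G x).
        u x (g \<otimes>\<^bsub>G x\<^esub> h) = u x g * u x h) \<and>
     (\<forall>x. \<forall>g \<in> carrier (G x). u x (inv\<^bsub>G x\<^esub> g) = invol (u x g)) \<and>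
     \<comment> \<open>(G1)\<close>
     (\<forall>x y. x \<noteq> y \<longrightarrow> u x \<one>\<^bsub>G x\<^esub> * u y \<one>\<^bsub>G y\<^esub> = 0) \<and>
     \<comment> \<open>(G2)\<close>
     (\<forall>e. \<forall>g \<in> carrier (H e). u (r e) (alpha e g) * sx e = sx e * u (s e) (alpha (bar e) g)) \<and>
     \<comment> \<open>(G3)\<close>
     (\<forall>e. u (s e) \<one>\<^bsub>G (s e)\<^esub> = invol (sx e) * sx e + sx (bar e) * invol (sx (bar e))) \<and>
     \<comment> \<open>(G4)\<close>
     (\<forall>e. invol (sx e) * sx e =
        (\<Sum>(\<mu>, f) \<in> {(\<mu>, f). r f = s e \<and> \<mu> \<in> Sig f \<and> (\<mu>, f) \<noteq> (\<one>\<^bsub>G (s e)\<^esub>, bar e)}.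
           u (s e) \<mu> * sx f * invol (sx f) * invol (u (s e) \<mu>)))"

end

theory Submission
  imports Defs
begin

text \<open>By (G3) and (G4), the range projections of the elements s_{ge} with r e = x and g \<in> \<Sigma>_e
  sum to the unit u_{x,1} of the vertex group at x, and s_e^* s_e is the sum of those with
  (g, e) \<noteq> (1, bar e). Projections whose sum is a projection are mutually orthogonal, so both
  relations follow by inserting these projections next to s_{ge} and s_{hf}.

  The orthogonality needs only the C*-identity. For P = E_a the corner elements P E_k P,
  k \<noteq> a, sum to zero while each P - P E_k P is a contraction. This forces every
  P E_k P = (E_k P)^* (E_k P) to vanish, because a self-adjoint h in the corner of P with
  norm (P + h) \<le> 1 and norm (P - h) \<le> 1 is zero: then norm (P + w h) \<le> 1 whenever |w| = 1,
  and the Cauchy estimate for the linear coefficient N h of w \<mapsto> (P + w h)^N gives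
  N norm h \<le> 1 for every N.\<close>

section \<open>Orthogonality of projections in C*-algebras\<close>

lemma invol_zero [simp]: "invol (0::'a::cstar_algebra) = 0"
  using invol_add[of "0::'a" 0] by simp

lemma invol_diff: "invol (x - y) = invol x - invol (y::'a::cstar_algebra)"
  using invol_add[of "x - y" y] by (simp add: eq_diff_eq)

lemma invol_scaleR: "invol (scaleR t x) = scaleR t (invol (x::'a::cstar_algebra))"
  by (metis scaleC_of_real invol_scaleC complex_cnj_complex_of_real)

lemma scaleC_zero_left [simp]: "scaleC 0 (x::'a::cstar_algebra) = 0"
  by (metis scaleC_of_real of_real_0 scaleR_zero_left)

lemma scaleC_zero_right [simp]: "scaleC c (0::'a::cstar_algebra) = 0"
  using scaleC_add_right[of c "0::'a" 0] by simp

lemma scaleC_sum_right: "scaleC c (sum f A) = (\<Sum>i\<in>A. scaleC c (f i :: 'a::cstar_algebra))"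
  by (induction A rule: infinite_finite_induct) (auto simp: scaleC_add_right)

lemma scaleC_sum_left: "scaleC (sum f A) x = (\<Sum>i\<in>A. scaleC (f i) (x :: 'a::cstar_algebra))"
  by (induction A rule: infinite_finite_induct) (auto simp: scaleC_add_left)

lemma norm_mult_le_1:
  fixes x y :: "'a::real_normed_algebra"
  shows "norm x \<le> 1 \<Longrightarrow> norm y \<le> 1 \<Longrightarrow> norm (x * y) \<le> 1"
  by (rule order_trans[OF norm_mult_ineq]) (simp add: mult_le_one)

lemma invol_mult_self_eq_0: "invol x * x = 0 \<Longrightarrow> x = (0::'a::cstar_algebra)"
  using cstar_identity[of x] by simp

definition projection :: "'a::cstar_algebra \<Rightarrow> bool" where
  "projection P \<longleftrightarrow> P * P = P \<and> invol P = P"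

lemma norm_projection_le_1:
  assumes "projection P"
  shows "norm P \<le> 1"
proof -
  have "norm P * norm P = norm P"
    using cstar_identity[of P] assms by (simp add: projection_def power2_eq_square)
  then show ?thesis by (cases "norm P = 0") auto
qed

lemma projection_diff:
  assumes U: "projection U" and E: "projection E" and UE: "U * E = E"
  shows "projection (U - E)"
proof -
  have "E * U = E"
    using arg_cong[OF UE, of invol] U E by (simp add: projection_def invol_mult)
  then show ?thesis
    using U E UE by (simp add: projection_def left_diff_distrib right_diff_distrib invol_diff)
qed

lemma partial_isometry_projections:
  assumes "x * invol x * x = x"
  shows "projection (invol x * x)" and "projection (x * invol x)"
proof -
  have "invol x * x * invol x = invol x"
    using arg_cong[OF assms, of invol] by (simp add: invol_mult invol_invol mult.assoc)
  then show "projection (invol x * x)" "projection (x * invol x)"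
    using assms by (simp_all add: projection_def invol_mult invol_invol mult.assoc[symmetric])
qed

lemma projection_mult_eq_0_if_corner_eq_0:
  assumes P: "projection P" and E: "projection E" and PEP: "P * E * P = 0"
  shows "P * E = 0"
proof -
  have "invol (E * P) * (E * P) = P * E * (E * P)"
    using P E by (simp add: projection_def invol_mult)
  also have "\<dots> = P * (E * E) * P" by (simp only: mult.assoc)
  also have "\<dots> = 0" using E PEP by (simp add: projection_def)
  finally have "E * P = 0" by (rule invol_mult_self_eq_0)
  moreover have "P * E = invol (E * P)" using P E by (simp add: projection_def invol_mult)
  ultimately show ?thesis by simp
qed

lemma idempotent_sum_imp_mult_eq_0:
  fixes P Q :: "'a::real_algebra"
  assumes P: "P * P = P" and Q: "Q * Q = Q" and PQ: "(P + Q) * (P + Q) = P + Q"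
  shows "P * Q = 0"
proof -
  have anti: "P * Q + Q * P = 0"
    using PQ P Q by (simp add: distrib_left distrib_right add.assoc) (simp add: add.commute)
  have "P * Q + P * Q * P = 0"
    using arg_cong[OF anti, of "(*) P"] P by (simp add: distrib_left mult.assoc[symmetric])
  moreover have "P * Q * P + Q * P = 0"
    using arg_cong[OF anti, of "\<lambda>x. x * P"] P by (simp add: distrib_right mult.assoc)
  ultimately have "P * Q = Q * P" by (metis add_right_cancel add.commute)
  then have "scaleR 2 (P * Q) = 0" using anti by (simp add: scaleR_2)
  then show ?thesis by simp
qed

text \<open>The algebra need not be unital, so powers are taken in the corner with unit P.\<close>

fun cpow :: "'a \<Rightarrow> 'a \<Rightarrow> nat \<Rightarrow> 'a::times" where
  "cpow P x 0 = P"
| "cpow P x (Suc n) = x * cpow P x n"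

lemma cpow_binomial:
  fixes P a :: "'a::real_algebra"
  assumes P: "P * P = P" and Pa: "P * a = a"
  shows "cpow P (P + a) n = (\<Sum>j\<le>n. scaleR (real (n choose j)) (cpow P a j))"
proof (induction n)
  case 0
  then show ?case by simp
next
  case (Suc n)
  have P_cpow: "P * cpow P a j = cpow P a j" for j
    by (cases j) (simp_all add: P Pa mult.assoc[symmetric])
  have "cpow P (P + a) (Suc n)
      = (\<Sum>j\<le>n. scaleR (real (n choose j)) (cpow P a j))
      + (\<Sum>j\<le>n. scaleR (real (n choose j)) (cpow P a (Suc j)))"
    using Suc by (simp add: distrib_right sum_distrib_left P_cpow scaleR_add_right sum.distrib)
  also have "(\<Sum>j\<le>n. scaleR (real (n choose j)) (cpow P a j))
      = (\<Sum>j\<le>Suc n. scaleR (real (n choose j)) (cpow P a j))"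
    by simp
  also have "\<dots> = P + (\<Sum>j\<le>n. scaleR (real (n choose Suc j)) (cpow P a (Suc j)))"
    by (subst sum.atMost_Suc_shift) simp
  also have "P + (\<Sum>j\<le>n. scaleR (real (n choose Suc j)) (cpow P a (Suc j)))
      + (\<Sum>j\<le>n. scaleR (real (n choose j)) (cpow P a (Suc j)))
      = P + (\<Sum>j\<le>n. scaleR (real (Suc n choose Suc j)) (cpow P a (Suc j)))"
    by (simp add: add.assoc sum.distrib[symmetric] scaleR_add_left[symmetric] add.commute)
  also have "\<dots> = (\<Sum>j\<le>Suc n. scaleR (real (Suc n choose j)) (cpow P a j))"
    by (subst sum.atMost_Suc_shift) simp
  finally show ?case .
qed

lemma cpow_scaleC: "cpow P (scaleC c x) j = scaleC (c ^ j) (cpow P x j :: 'a::cstar_algebra)"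
  by (induction j)
     (simp_all add: scaleC_one mult_scaleC_left mult_scaleC_right scaleC_scaleC mult.commute)

lemma norm_cpow_le_1:
  fixes P x :: "'a::real_normed_algebra"
  assumes "norm P \<le> 1" and "norm x \<le> 1"
  shows "norm (cpow P x n) \<le> 1"
  by (induction n) (simp_all add: assms norm_mult_le_1)

lemma norm_rotated_le_1:
  fixes P h :: "'a::cstar_algebra"
  assumes P: "projection P" and h: "invol h = h" and Ph: "P * h = h" and hP: "h * P = h"
    and plus: "norm (P + h) \<le> 1" and minus: "norm (P - h) \<le> 1" and w: "cmod w = 1"
  shows "norm (P + scaleC w h) \<le> 1"
proof -
  define x where "x = P + scaleC w h"
  define t where "t = Re w"
  have t: "\<bar>t\<bar> \<le> 1" using abs_Re_le_cmod[of w] w by (simp add: t_def)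
  have w_cnj: "w * cnj w = 1" by (metis complex_norm_square of_real_1 power_one w)
  have "invol x * x = (P + scaleC (cnj w) h) * (P + scaleC w h)"
    using P h by (simp add: x_def projection_def invol_add invol_scaleC)
  also have "\<dots> = P * P + P * scaleC w h + scaleC (cnj w) h * P + scaleC (cnj w) h * scaleC w h"
    by (simp add: distrib_left distrib_right add.assoc)
  also have "\<dots> = P + (scaleC w h + scaleC (cnj w) h) + h * h"
    using P Ph hP
    by (simp add: projection_def mult_scaleC_left mult_scaleC_right scaleC_scaleC w_cnj scaleC_one add.assoc)
  also have "scaleC w h + scaleC (cnj w) h = scaleR (2 * t) h"
    by (simp only: t_def complex_add_cnj scaleC_of_real flip: scaleC_add_left)
  also have "P + scaleR (2 * t) h + h * h
      = scaleR ((1 + t) / 2) (P + scaleR 2 h + h * h) + scaleR ((1 - t) / 2) (P - scaleR 2 h + h * h)"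
  proof -
    have "scaleR ((1 + t) / 2) (P + scaleR 2 h + h * h) + scaleR ((1 - t) / 2) (P - scaleR 2 h + h * h)
        = scaleR ((1 + t) / 2 + (1 - t) / 2) P + scaleR (2 * ((1 + t) / 2) - 2 * ((1 - t) / 2)) h
          + scaleR ((1 + t) / 2 + (1 - t) / 2) (h * h)"
      by (simp add: scaleR_add_right scaleR_diff_right scaleR_add_left scaleR_diff_left algebra_simps)
    then show ?thesis by (simp add: field_simps)
  qed
  \<comment> \<open>a convex combination of the squares of the self-adjoint elements P + h and P - h\<close>
  also have "\<dots> = scaleR ((1 + t) / 2) ((P + h) * (P + h)) + scaleR ((1 - t) / 2) ((P - h) * (P - h))"
    using P Ph hP by (simp add: projection_def algebra_simps scaleR_2)
  finally have "norm (invol x * x)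
      \<le> \<bar>(1 + t) / 2\<bar> * norm ((P + h) * (P + h)) + \<bar>(1 - t) / 2\<bar> * norm ((P - h) * (P - h))"
    by (metis norm_scaleR norm_triangle_ineq)
  also have "\<dots> \<le> \<bar>(1 + t) / 2\<bar> + \<bar>(1 - t) / 2\<bar>"
    using norm_mult_le_1[OF plus plus] norm_mult_le_1[OF minus minus]
    by (intro add_mono) (simp_all add: mult_left_le)
  also have "\<dots> = 1" using t by (auto simp: field_simps)
  finally have "norm x ^ 2 \<le> 1" by (simp add: cstar_identity)
  then show ?thesis by (simp add: x_def power_le_one_iff)
qed

lemma cis_root_power_eq_1_imp_dvd:
  assumes N: "N \<ge> 1" and m: "cis (2 * pi / real N) ^ m = 1"
  shows "N dvd m"
proof -
  have "cos (real m * (2 * pi / real N)) = 1"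
    using m by (simp add: DeMoivre complex_eq_iff)
  then obtain n :: int where "real m * (2 * pi / real N) = of_int n * 2 * pi"
    using cos_one_2pi_int by blast
  then have "real m = of_int n * real N" using N by (simp add: field_simps)
  then have "int m = n * int N" by (metis of_int_eq_iff of_int_mult of_int_of_nat_eq)
  then show ?thesis by (metis dvd_triv_right int_dvd_int_iff mult.commute)
qed

lemma sum_cis_root_powers:
  assumes N: "N \<ge> 1"
  shows "(\<Sum>k<N. (cis (2 * pi / real N) ^ m) ^ k) = (if N dvd m then of_nat N else 0)"
proof -
  define q where "q = cis (2 * pi / real N) ^ m"
  have root: "cis (2 * pi / real N) ^ N = 1" using N by (simp add: DeMoivre)
  then have "q ^ N = 1" by (metis q_def power_mult mult.commute power_one)
  show ?thesis
  proof (cases "N dvd m")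
    case True
    then have "q = 1" by (auto simp: q_def power_mult root)
    then show ?thesis using True by (simp add: q_def)
  next
    case False
    then have "q \<noteq> 1" using cis_root_power_eq_1_imp_dvd[OF N] by (auto simp: q_def)
    then show ?thesis using False \<open>q ^ N = 1\<close> by (simp add: geometric_sum flip: q_def)
  qed
qed

lemma dvd_pred_add_iff:
  fixes N j :: nat
  assumes "2 \<le> N" and "j \<le> N"
  shows "N dvd N - 1 + j \<longleftrightarrow> j = 1"
proof
  assume "N dvd N - 1 + j"
  then obtain q where q: "N - 1 + j = N * q" by (elim dvdE)
  have "q \<noteq> 0"
  proof
    assume "q = 0"
    with q assms show False by simp
  qed
  moreover have "N * q < N * 2" using q assms by linarith
  ultimately have "q = 1" by simp
  then show "j = 1" using q assms by simp
qed (use assms in simp)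

text \<open>A discrete Cauchy formula: averaging the polynomial w \<mapsto> (P + w h)^N against
  \<omega>^-k over the N-th roots of unity \<omega>^k extracts its linear coefficient N h.\<close>

lemma cpow_average_over_roots_of_unity:
  fixes P h :: "'a::cstar_algebra"
  assumes P: "P * P = P" and Ph: "P * h = h" and hP: "h * P = h" and N: "N \<ge> 2"
  defines "\<omega> \<equiv> cis (2 * pi / real N)"
  shows "(\<Sum>k<N. scaleC ((\<omega> ^ (N - 1)) ^ k) (cpow P (P + scaleC (\<omega> ^ k) h) N))
    = scaleC (of_nat (N * N)) h"
proof -
  have expand: "cpow P (P + scaleC (\<omega> ^ k) h) N
      = (\<Sum>j\<le>N. scaleC (of_nat (N choose j) * (\<omega> ^ j) ^ k) (cpow P h j))" for k
  proof -
    have "P * scaleC (\<omega> ^ k) h = scaleC (\<omega> ^ k) h" by (simp add: mult_scaleC_right Ph)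
    then have "cpow P (P + scaleC (\<omega> ^ k) h) N
        = (\<Sum>j\<le>N. scaleR (real (N choose j)) (cpow P (scaleC (\<omega> ^ k) h) j))"
      by (rule cpow_binomial[OF P])
    then show ?thesis
      by (simp add: cpow_scaleC scaleC_scaleC power_mult[symmetric] mult.commute
          flip: scaleC_of_real)
  qed
  have "(\<Sum>k<N. scaleC ((\<omega> ^ (N - 1)) ^ k) (cpow P (P + scaleC (\<omega> ^ k) h) N))
      = (\<Sum>k<N. \<Sum>j\<le>N. scaleC (of_nat (N choose j) * (\<omega> ^ (N - 1 + j)) ^ k) (cpow P h j))"
  proof -
    have split: "(\<omega> ^ (N - 1 + j)) ^ k = (\<omega> ^ (N - 1)) ^ k * (\<omega> ^ j) ^ k" for j k
      by (simp only: power_add power_mult_distrib)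
    show ?thesis
      unfolding expand split by (simp add: scaleC_sum_right scaleC_scaleC mult_ac)
  qed
  also have "\<dots> = (\<Sum>j\<le>N. scaleC (of_nat (N choose j) * (\<Sum>k<N. (\<omega> ^ (N - 1 + j)) ^ k)) (cpow P h j))"
    by (subst sum.swap) (simp add: scaleC_sum_left sum_distrib_left)
  also have "\<dots> = (\<Sum>j\<le>N. if j = 1 then scaleC (of_nat (N * N)) h else 0)"
  proof (intro sum.cong refl)
    fix j assume "j \<in> {..N}"
    then have "(\<Sum>k<N. (\<omega> ^ (N - 1 + j)) ^ k) = (if j = 1 then of_nat N else 0)"
      using sum_cis_root_powers[of N "N - 1 + j"] dvd_pred_add_iff[OF N, of j] N
      by (simp add: \<omega>_def)
    then show "scaleC (of_nat (N choose j) * (\<Sum>k<N. (\<omega> ^ (N - 1 + j)) ^ k)) (cpow P h j)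
        = (if j = 1 then scaleC (of_nat (N * N)) h else 0)"
      using hP by simp
  qed
  also have "\<dots> = scaleC (of_nat (N * N)) h"
    using N by simp
  finally show ?thesis .
qed

lemma corner_perturbation_eq_0:
  fixes P h :: "'a::cstar_algebra"
  assumes P: "projection P" and h: "invol h = h" and Ph: "P * h = h" and hP: "h * P = h"
    and plus: "norm (P + h) \<le> 1" and minus: "norm (P - h) \<le> 1"
  shows "h = 0"
proof -
  have bound: "real N * norm h \<le> 1" if N: "N \<ge> 2" for N
  proof -
    define \<omega> where "\<omega> = cis (2 * pi / real N)"
    have "real (N * N) * norm h
        = norm (\<Sum>k<N. scaleC ((\<omega> ^ (N - 1)) ^ k) (cpow P (P + scaleC (\<omega> ^ k) h) N))"
      using cpow_average_over_roots_of_unity[OF _ Ph hP N] P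
      by (simp add: \<omega>_def projection_def norm_scaleC norm_mult)
    also have "\<dots> \<le> (\<Sum>k<N. norm (cpow P (P + scaleC (\<omega> ^ k) h) N))"
      by (rule order_trans[OF norm_sum]) (simp add: norm_scaleC norm_power \<omega>_def)
    also have "\<dots> \<le> (\<Sum>k<N. 1)"
      by (intro sum_mono norm_cpow_le_1 norm_projection_le_1[OF P]
          norm_rotated_le_1[OF P h Ph hP plus minus]) (simp add: \<omega>_def norm_power)
    finally show ?thesis using N by simp
  qed
  show "h = 0"
  proof (rule ccontr)
    assume "h \<noteq> 0"
    obtain N :: nat where N: "max 2 (1 / norm h) < real N" using reals_Archimedean2 by blast
    then have "1 < real N * norm h" using \<open>h \<noteq> 0\<close> by (simp add: field_simps)
    with bound[of N] N show False by simp
  qed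
qed

lemma corner_contractions_sum_eq_0:
  fixes T :: "'i \<Rightarrow> 'a::cstar_algebra"
  assumes J: "finite J" and P: "projection P"
    and T: "\<And>k. k \<in> J \<Longrightarrow>
      invol (T k) = T k \<and> P * T k = T k \<and> T k * P = T k \<and> norm (P - T k) \<le> 1"
    and sum_T: "sum T J = 0" and b: "b \<in> J"
  shows "T b = 0"
proof -
  define R where "R = J - {b}"
  define c where "c = real (card R)"
  have sum_R: "sum T R = - T b"
    using sum.remove[OF J b, of T] sum_T by (simp add: R_def eq_neg_iff_add_eq_0 add.commute)
  show ?thesis
  proof (cases "R = {}")
    case True
    then show ?thesis using sum_R by simp
  next
    case False
    then have c: "c \<ge> 1" using J by (simp add: c_def R_def Suc_le_eq card_gt_0_iff)
    have "norm (scaleR c P + T b) \<le> c"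
    proof -
      have "scaleR c P + T b = (\<Sum>k\<in>R. P - T k)"
        by (simp add: sum_subtractf sum_R c_def sum_constant_scaleR)
      also have "norm \<dots> \<le> (\<Sum>k\<in>R. norm (P - T k))" by (rule norm_sum)
      also have "\<dots> \<le> (\<Sum>k\<in>R. 1)" using T by (intro sum_mono) (simp add: R_def)
      finally show ?thesis by (simp add: c_def)
    qed
    \<comment> \<open>P + h is the average of the contractions P - T k over k \<in> R,
      and P - h is a convex combination of P and P - T b\<close>
    define h where "h = scaleR (1 / c) (T b)"
    have "P + h = scaleR (1 / c) (scaleR c P + T b)" using c by (simp add: h_def scaleR_add_right)
    with \<open>norm (scaleR c P + T b) \<le> c\<close> have plus: "norm (P + h) \<le> 1"
      using c by (simp add: divide_le_eq)
    have "norm (P - h) \<le> norm (scaleR (1 - 1 / c) P) + norm (scaleR (1 / c) (P - T b))"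
      by (rule order_trans[OF _ norm_triangle_ineq])
         (simp add: h_def scaleR_diff_right scaleR_diff_left)
    also have "\<dots> = (1 - 1 / c) * norm P + 1 / c * norm (P - T b)"
      using c by simp
    also have "\<dots> \<le> (1 - 1 / c) * 1 + 1 / c * 1"
      using c norm_projection_le_1[OF P] T[OF b] by (intro add_mono mult_left_mono) simp_all
    finally have minus: "norm (P - h) \<le> 1" by simp
    have "h = 0"
      using T[OF b] by (intro corner_perturbation_eq_0[OF P _ _ _ plus minus])
        (simp_all add: h_def invol_scaleR)
    then show ?thesis using c by (simp add: h_def)
  qed
qed

lemma projections_sum_orthogonal:
  fixes E :: "'i \<Rightarrow> 'a::cstar_algebra"
  assumes I: "finite I" and U: "projection U"
    and E: "\<And>i. i \<in> I \<Longrightarrow> projection (E i) \<and> U * E i = E i"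
    and sum_E: "sum E I = U" and a: "a \<in> I" and b: "b \<in> I" and ab: "a \<noteq> b"
  shows "E a * E b = 0"
proof -
  define P where "P = E a"
  define T where "T k = P * E k * P" for k
  have P: "projection P" using E[OF a] by (simp add: P_def)
  have PU: "P * U = P"
    using arg_cong[of _ _ invol, OF conjunct2[OF E[OF a]]] U P
    by (simp add: P_def projection_def invol_mult)
  have "sum T (I - {a}) = P * (U - P) * P"
    using sum.remove[OF I a, of E] sum_E
    by (simp add: T_def P_def sum_distrib_left sum_distrib_right algebra_simps)
  then have "sum T (I - {a}) = 0"
    using P PU by (simp add: projection_def algebra_simps)
  moreover have "invol (T k) = T k \<and> P * T k = T k \<and> T k * P = T k \<and> norm (P - T k) \<le> 1"
    if k: "k \<in> I" for k
  proof -
    have "P - T k = P * (U - E k) * P"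
      using P PU by (simp add: T_def projection_def algebra_simps)
    moreover have "norm (U - E k) \<le> 1"
      using E[OF k] by (intro norm_projection_le_1 projection_diff[OF U]) simp_all
    ultimately have "norm (P - T k) \<le> 1"
      by (simp add: norm_mult_le_1 norm_projection_le_1[OF P])
    moreover have "P * T k = T k" using P by (simp add: T_def projection_def flip: mult.assoc)
    moreover have "T k * P = T k" using P by (simp add: T_def projection_def mult.assoc)
    moreover have "invol (T k) = T k"
      using P E[OF k] by (simp add: T_def projection_def invol_mult mult.assoc)
    ultimately show ?thesis by blast
  qed
  ultimately have "T b = 0"
    using I P b ab by (intro corner_contractions_sum_eq_0[of "I - {a}" P T b]) simp_all
  then show ?thesis
    using projection_mult_eq_0_if_corner_eq_0[OF P, of "E b"] E[OF b] by (simp add: P_def T_def)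
qed

section \<open>Graphs of groups\<close>

lemma finite_left_transversal:
  assumes Gr: "group Gr" and K: "subgroup K Gr" and T: "left_transversal Gr K T"
    and cosets: "finite (left_cosets Gr K)"
  shows "finite T"
proof -
  have T_carrier: "T \<subseteq> carrier Gr"
    and unique: "\<And>a. a \<in> carrier Gr \<Longrightarrow> \<exists>!t. t \<in> T \<and> t \<in> a <#\<^bsub>Gr\<^esub> K"
    using T unfolding left_transversal_def by auto
  have self: "a \<in> a <#\<^bsub>Gr\<^esub> K" if "a \<in> carrier Gr" for a
    using that subgroup.one_closed[OF K] Gr
    unfolding l_coset_def by (force intro: bexI[of _ "\<one>\<^bsub>Gr\<^esub>"] simp: group.is_monoid monoid.r_one)
  have "inj_on (\<lambda>t. t <#\<^bsub>Gr\<^esub> K) T"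
  proof (rule inj_onI)
    fix t t' assume t: "t \<in> T" and t': "t' \<in> T" and eq: "t <#\<^bsub>Gr\<^esub> K = t' <#\<^bsub>Gr\<^esub> K"
    then have "t' \<in> t <#\<^bsub>Gr\<^esub> K" and "t \<in> t <#\<^bsub>Gr\<^esub> K"
      using self T_carrier by auto
    then show "t = t'" using unique[of t] t t' T_carrier by blast
  qed
  moreover have "(\<lambda>t. t <#\<^bsub>Gr\<^esub> K) ` T \<subseteq> left_cosets Gr K"
    using T_carrier unfolding left_cosets_def by auto
  ultimately show ?thesis using cosets by (metis finite_imageD finite_subset)
qed

locale gog_family =
  fixes r s :: "'e \<Rightarrow> 'v" and bar :: "'e \<Rightarrow> 'e"
    and G :: "'v \<Rightarrow> 'g monoid" and H :: "'e \<Rightarrow> 'h monoid"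
    and alpha :: "'e \<Rightarrow> 'h \<Rightarrow> 'g" and Sig :: "'e \<Rightarrow> 'g set"
    and u :: "'v \<Rightarrow> 'g \<Rightarrow> 'a::cstar_algebra" and sx :: "'e \<Rightarrow> 'a"
  assumes gog: "graph_of_groups r s bar G H alpha"
    and lf: "locally_finite_gog r G H alpha"
    and trans: "\<And>e. left_transversal (G (r e)) (alpha e ` carrier (H e)) (Sig e)"
    and one_in: "\<And>e. \<one>\<^bsub>G (r e)\<^esub> \<in> Sig e"
    and fam: "G_family r s bar G H alpha Sig u sx"
begin

lemma group_G: "group (G x)"
  using gog unfolding graph_of_groups_def by auto

lemma bar_bar [simp]: "bar (bar e) = e"
  using gog unfolding graph_of_groups_def by auto

lemma s_bar [simp]: "s (bar e) = r e"
  using gog unfolding graph_of_groups_def by metis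

lemma Sig_carrier: "g \<in> Sig e \<Longrightarrow> g \<in> carrier (G (r e))"
  using trans[of e] unfolding left_transversal_def by auto

lemma finite_Sig: "finite (Sig e)"
proof (rule finite_left_transversal[OF group_G _ trans])
  have "group_hom (H e) (G (r e)) (alpha e)"
    using gog group_G unfolding graph_of_groups_def group_hom_def group_hom_axioms_def by auto
  then show "subgroup (alpha e ` carrier (H e)) (G (r e))"
    by (rule group_hom.img_is_subgroup)
  show "finite (left_cosets (G (r e)) (alpha e ` carrier (H e)))"
    using lf unfolding locally_finite_gog_def by auto
qed

abbreviation U :: "'v \<Rightarrow> 'a" where
  "U x \<equiv> u x \<one>\<^bsub>G x\<^esub>"

lemma u_mult: "g \<in> carrier (G x) \<Longrightarrow> h \<in> carrier (G x) \<Longrightarrow> u x (g \<otimes>\<^bsub>G x\<^esub> h) = u x g * u x h"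
  using fam unfolding G_family_def by auto

lemma u_inv: "g \<in> carrier (G x) \<Longrightarrow> u x (inv\<^bsub>G x\<^esub> g) = invol (u x g)"
  using fam unfolding G_family_def by auto

lemma U_mult_U: "x \<noteq> y \<Longrightarrow> U x * U y = 0"
  using fam unfolding G_family_def by auto

lemma U_source_range: "U (s e) = invol (sx e) * sx e + sx (bar e) * invol (sx (bar e))"
  using fam unfolding G_family_def by auto

lemma partial_isometry_sx: "sx e * invol (sx e) * sx e = sx e"
  using fam unfolding G_family_def by auto

lemma U_mult_u: "g \<in> carrier (G x) \<Longrightarrow> U x * u x g = u x g"
  using u_mult[of "\<one>\<^bsub>G x\<^esub>" x g] group_G by (simp add: group.is_monoid monoid.l_one)

lemma invol_u_mult_u: "g \<in> carrier (G x) \<Longrightarrow> invol (u x g) * u x g = U x"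
  using u_mult[of "inv\<^bsub>G x\<^esub> g" x g] u_inv[of g x] group_G by (simp add: group.l_inv)

lemma projection_U: "projection (U x)"
proof -
  have one: "\<one>\<^bsub>G x\<^esub> \<in> carrier (G x)" and "inv\<^bsub>G x\<^esub> \<one>\<^bsub>G x\<^esub> = \<one>\<^bsub>G x\<^esub>"
    using group_G[of x] by (simp_all add: group.is_monoid monoid.one_closed monoid.inv_one)
  then show ?thesis using U_mult_u[OF one] u_inv[OF one] by (simp add: projection_def)
qed

lemma source_mult_range_bar: "invol (sx e) * sx e * (sx (bar e) * invol (sx (bar e))) = 0"
  using partial_isometry_projections(1)[OF partial_isometry_sx[of e]]
    partial_isometry_projections(2)[OF partial_isometry_sx[of "bar e"]] projection_U[of "s e"]
  by (intro idempotent_sum_imp_mult_eq_0) (simp_all add: projection_def flip: U_source_range)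

lemma source_mult_U: "invol (sx e) * sx e * U (s e) = invol (sx e) * sx e"
  using source_mult_range_bar[of e] partial_isometry_projections(1)[OF partial_isometry_sx[of e]]
  by (simp add: U_source_range distrib_left projection_def)

lemma U_mult_sx: "U (r e) * sx e = sx e"
proof -
  have "U (r e) * (sx e * invol (sx e)) = sx e * invol (sx e)"
    using U_source_range[of "bar e"] source_mult_range_bar[of "bar e"]
      partial_isometry_projections(2)[OF partial_isometry_sx[of e]]
    by (simp add: distrib_right projection_def)
  then show ?thesis using partial_isometry_sx[of e] by (metis mult.assoc)
qed

definition sxg :: "'g \<Rightarrow> 'e \<Rightarrow> 'a" where
  "sxg g e = u (r e) g * sx e"

definition range_proj :: "'g \<times> 'e \<Rightarrow> 'a" where
  "range_proj = (\<lambda>(g, e). sxg g e * invol (sxg g e))"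

definition in_edges :: "'v \<Rightarrow> ('g \<times> 'e) set" where
  "in_edges x = {(g, e). r e = x \<and> g \<in> Sig e}"

lemma sxg_one: "sxg \<one>\<^bsub>G (r e)\<^esub> e = sx e"
  by (simp add: sxg_def U_mult_sx)

lemma U_mult_sxg:
  assumes g: "g \<in> carrier (G (r e))"
  shows "U x * sxg g e = (if x = r e then sxg g e else 0)"
proof (cases "x = r e")
  case True
  then show ?thesis using U_mult_u[OF g] by (simp add: sxg_def flip: mult.assoc)
next
  case False
  have "U x * sxg g e = U x * U (r e) * sxg g e"
    using U_mult_u[OF g] by (simp add: sxg_def mult.assoc flip: mult.assoc[of "U (r e)"])
  then show ?thesis using U_mult_U[OF False] False by simp
qed

lemma invol_sxg_mult_sxg:
  assumes g: "g \<in> carrier (G (r e))"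
  shows "invol (sxg g e) * sxg g e = invol (sx e) * sx e"
proof -
  have "invol (sxg g e) * sxg g e = invol (sx e) * (invol (u (r e) g) * u (r e) g) * sx e"
    by (simp add: sxg_def invol_mult mult.assoc)
  also have "\<dots> = invol (sx e) * sx e"
    by (simp add: invol_u_mult_u[OF g] mult.assoc U_mult_sx)
  finally show ?thesis .
qed

lemma range_proj_mult_sxg:
  assumes g: "g \<in> carrier (G (r e))"
  shows "range_proj (g, e) * sxg g e = sxg g e"
proof -
  have "range_proj (g, e) * sxg g e = u (r e) g * (sx e * invol (sx e) * sx e)"
    by (simp add: range_proj_def mult.assoc invol_sxg_mult_sxg[OF g]) (simp add: sxg_def mult.assoc)
  then show ?thesis by (simp add: partial_isometry_sx sxg_def)
qed

lemma projection_range_proj: "g \<in> carrier (G (r e)) \<Longrightarrow> projection (range_proj (g, e))"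
  using partial_isometry_projections(2)[of "sxg g e"] range_proj_mult_sxg
  by (simp add: range_proj_def)

lemma U_mult_range_proj: "g \<in> carrier (G (r e)) \<Longrightarrow> U (r e) * range_proj (g, e) = range_proj (g, e)"
  by (simp add: range_proj_def U_mult_sxg flip: mult.assoc)

lemma finite_in_edges: "finite (in_edges x)"
proof -
  have "in_edges x = (\<Union>e\<in>{e. r e = x}. (\<lambda>g. (g, e)) ` Sig e)"
    by (auto simp: in_edges_def)
  then show ?thesis using lf finite_Sig unfolding locally_finite_gog_def by simp
qed

lemma source_eq_sum_range_proj:
  "invol (sx e) * sx e = sum range_proj (in_edges (s e) - {(\<one>\<^bsub>G (s e)\<^esub>, bar e)})"
proof -
  have "invol (sx e) * sx e
      = (\<Sum>(\<mu>, f) \<in> {(\<mu>, f). r f = s e \<and> \<mu> \<in> Sig f \<and> (\<mu>, f) \<noteq> (\<one>\<^bsub>G (s e)\<^esub>, bar e)}.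
           u (s e) \<mu> * sx f * invol (sx f) * invol (u (s e) \<mu>))"
    using fam unfolding G_family_def by blast
  also have "\<dots> = sum range_proj (in_edges (s e) - {(\<one>\<^bsub>G (s e)\<^esub>, bar e)})"
    by (intro sum.cong) (auto simp: in_edges_def range_proj_def sxg_def invol_mult mult.assoc)
  finally show ?thesis .
qed

lemma sum_range_proj: "sum range_proj (in_edges (r e)) = U (r e)"
proof -
  have one: "(\<one>\<^bsub>G (r e)\<^esub>, e) \<in> in_edges (r e)"
    using one_in[of e] by (simp add: in_edges_def)
  have "sum range_proj (in_edges (r e))
      = range_proj (\<one>\<^bsub>G (r e)\<^esub>, e) + sum range_proj (in_edges (r e) - {(\<one>\<^bsub>G (r e)\<^esub>, e)})"
    by (rule sum.remove[OF finite_in_edges one])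
  also have "\<dots> = sx e * invol (sx e) + invol (sx (bar e)) * sx (bar e)"
    using source_eq_sum_range_proj[of "bar e"] by (simp add: range_proj_def sxg_one)
  also have "\<dots> = U (r e)"
    using U_source_range[of "bar e"] by (simp add: add.commute)
  finally show ?thesis .
qed

lemma range_proj_orthogonal:
  assumes p: "p \<in> in_edges x" and q: "q \<in> in_edges x" and pq: "p \<noteq> q"
  shows "range_proj p * range_proj q = 0"
proof -
  obtain g e where "p = (g, e)" and x: "x = r e" using p by (auto simp: in_edges_def)
  show ?thesis
  proof (rule projections_sum_orthogonal[OF finite_in_edges projection_U _ sum_range_proj])
    fix i assume "i \<in> in_edges (r e)"
    then obtain \<mu> f where "i = (\<mu>, f)" "r f = r e" "\<mu> \<in> Sig f"
      by (auto simp: in_edges_def)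
    then show "projection (range_proj i) \<and> U (r e) * range_proj i = range_proj i"
      using projection_range_proj[OF Sig_carrier] U_mult_range_proj[OF Sig_carrier] by metis
  qed (use p q pq x in simp_all)
qed

lemma range_proj_mult_sxg_in_edges:
  assumes p: "p \<in> in_edges (r f)" and h: "h \<in> Sig f"
  shows "range_proj p * sxg h f = (if p = (h, f) then sxg h f else 0)"
proof (cases "p = (h, f)")
  case True
  then show ?thesis using range_proj_mult_sxg[OF Sig_carrier[OF h]] by simp
next
  case False
  have hf: "(h, f) \<in> in_edges (r f)" using h by (simp add: in_edges_def)
  have "range_proj p * sxg h f = range_proj p * range_proj (h, f) * sxg h f"
    by (simp add: range_proj_mult_sxg[OF Sig_carrier[OF h]] mult.assoc)
  also have "\<dots> = 0" by (simp add: range_proj_orthogonal[OF p hf False])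
  finally show ?thesis using False by simp
qed

lemma invol_sxg_mult_sxg_Sig:
  assumes g: "g \<in> Sig e" and h: "h \<in> Sig f"
  shows "invol (sxg g e) * sxg h f = (if e = f \<and> g = h then invol (sx e) * sx e else 0)"
proof (cases "r e = r f")
  case True
  have "invol (sxg g e) * sxg h f = invol (range_proj (g, e) * sxg g e) * sxg h f"
    by (simp add: range_proj_mult_sxg[OF Sig_carrier[OF g]])
  also have "\<dots> = invol (sxg g e) * (range_proj (g, e) * sxg h f)"
    using projection_range_proj[OF Sig_carrier[OF g]]
    by (simp add: invol_mult projection_def mult.assoc)
  also have "\<dots> = (if (g, e) = (h, f) then invol (sxg g e) * sxg g e else 0)"
    using g True by (simp add: range_proj_mult_sxg_in_edges[OF _ h] in_edges_def)
  finally show ?thesis using invol_sxg_mult_sxg[OF Sig_carrier[OF g]] by auto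
next
  case False
  have "invol (sxg g e) * sxg h f = invol (U (r e) * sxg g e) * sxg h f"
    by (simp add: U_mult_sxg[OF Sig_carrier[OF g]])
  also have "\<dots> = invol (sxg g e) * (U (r e) * sxg h f)"
    using projection_U[of "r e"] by (simp add: invol_mult projection_def mult.assoc)
  finally show ?thesis using False by (auto simp: U_mult_sxg[OF Sig_carrier[OF h]])
qed

lemma source_mult_sxg:
  assumes h: "h \<in> Sig f"
  shows "invol (sx e) * sx e * sxg h f
    = (if r f = s e \<and> \<not> (f = bar e \<and> h = \<one>\<^bsub>G (r f)\<^esub>) then sxg h f else 0)"
proof (cases "r f = s e")
  case True
  have "invol (sx e) * sx e * sxg h f
      = (\<Sum>p \<in> in_edges (r f) - {(\<one>\<^bsub>G (r f)\<^esub>, bar e)}. range_proj p * sxg h f)"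
    using True by (simp add: source_eq_sum_range_proj sum_distrib_right)
  also have "\<dots> = (\<Sum>p \<in> in_edges (r f) - {(\<one>\<^bsub>G (r f)\<^esub>, bar e)}. if p = (h, f) then sxg h f else 0)"
    by (intro sum.cong refl) (simp add: range_proj_mult_sxg_in_edges[OF _ h])
  also have "\<dots> = (if r f = s e \<and> \<not> (f = bar e \<and> h = \<one>\<^bsub>G (r f)\<^esub>) then sxg h f else 0)"
    using True h finite_in_edges by (auto simp: in_edges_def)
  finally show ?thesis .
next
  case False
  have "invol (sx e) * sx e * sxg h f = invol (sx e) * sx e * (U (s e) * sxg h f)"
    by (simp add: source_mult_U flip: mult.assoc)
  then show ?thesis using False by (simp add: U_mult_sxg[OF Sig_carrier[OF h]])
qed

end

theorem lemma4p2:
  fixes r s :: "'e \<Rightarrow> 'v" and bar :: "'e \<Rightarrow> 'e"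
    and G :: "'v \<Rightarrow> 'g monoid" and H :: "'e \<Rightarrow> 'h monoid"
    and alpha :: "'e \<Rightarrow> 'h \<Rightarrow> 'g" and Sig :: "'e \<Rightarrow> 'g set"
    and u :: "'v \<Rightarrow> 'g \<Rightarrow> 'a::cstar_algebra" and sx :: "'e \<Rightarrow> 'a"
  assumes gog: "graph_of_groups r s bar G H alpha"
    and lf: "locally_finite_gog r G H alpha"
    and ns: "nonsingular_gog r G H alpha"
    and trans: "\<And>e. left_transversal (G (r e)) (alpha e ` carrier (H e)) (Sig e)"
    and one_in: "\<And>e. \<one>\<^bsub>G (r e)\<^esub> \<in> Sig e"
    and fam: "G_family r s bar G H alpha Sig u sx"
    and g: "g \<in> Sig e" and h: "h \<in> Sig f"
  shows "invol (u (r e) g * sx e) * (u (r f) h * sx f)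
           = (if e = f \<and> g = h then invol (sx e) * sx e else 0)
         \<and> invol (sx e) * sx e * (u (r f) h * sx f)
           = (if r f = s e \<and> \<not> (f = bar e \<and> h = \<one>\<^bsub>G (r f)\<^esub>) then u (r f) h * sx f else 0)"
proof -
  interpret gog_family r s bar G H alpha Sig u sx
    by (intro gog_family.intro) (fact gog lf trans one_in fam)+
  show ?thesis
    using invol_sxg_mult_sxg_Sig[OF g h] source_mult_sxg[OF h] unfolding sxg_def by blast
qed

end
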